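(* Let $(X,\sigma,\tau)$ be a separable, chronologically dense Lorentzian metric space satisfying the S-property, and let $(P,F),(P',F')\in\overline{X}$ with $F\neq\emptyset\neq P'$. Then there exist a past chain $\{q_n\}$ with $F=I^+[\{q_n\}]$ and a future chain $\{p'_n\}$ with $P'=I^-[\{p'_n\}]$; for any such chains the limit $\lim_n\tau(q_n,p'_n)$ exists in $[0,\infty]$, and it does not depend on the choice of the chains. Consequently $\overline{\tau}:\overline X\times\overline X\to[0,\infty]$ is well defined.
   Context: A Lorentzian metric space $(X,\sigma,\tau)$ is a topological space with $\tau:X\times X\to[0,\infty]$ lower semicontinuous and satisfying $\tau(x,z)\geq\tau(x,y)+\tau(y,z)$ whenever $\tau(x,y),\tau(y,z)>0$. Write $x\ll y$ iff $\tau(x,y)>0$, $I^+(x)=\{y:x\ll y\}$, $I^-(x)=\{y:y\ll x\}$, $I^\pm[A]=\bigcup_{a\in A}I^\pm(a)$. Future (resp. past) chain: $x_n\ll x_{n+1}$ (resp. $x_{n+1}\ll x_n$) for all $n$. Separable: there is a countable $S$ with $x\ll y\Rightarrow\exists s\in S$, $x\ll s\ll y$. Chronologically dense: every $x$ with $I^-(x)\neq\emptyset$ (resp. $I^+(x)\neq\emptyset$) is the $\sigma$-limit of a future (resp. past) chain. Past set: $P=I^-[P]$; $\downarrow S=I^-[\{p:p\ll q\ \forall q\in S\}]$; IP: past set not the union of two proper past subsets; PIP: IP of the form $I^-(p)$; future sets, $\uparrow S$, IF, PIF dually. For nonempty IP $P$ and IF $F$, $P\sim_S F$ iff $P$ is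 a maximal IP in $\downarrow F$ and $F$ a maximal IF in $\uparrow P$; $P\sim_S\emptyset$ (resp. $\emptyset\sim_S F$) if the nonempty $P$ (resp. $F$) is S-related to no nonempty IF (resp. IP). S-property: for every $x$, $I^-(x)\sim_S I^+(x)$, and no PIF other than $I^+(x)$ (resp. PIP other than $I^-(x)$) is S-related to $I^-(x)$ (resp. $I^+(x)$). c-completion $\overline X=\{(P,F):P\sim_S F\}$. The map $\overline\tau$ is defined by $\overline\tau((P,F),(P',F'))=0$ if $F=\emptyset$ or $P'=\emptyset$, and $\overline\tau((P,F),(P',F'))=\lim_n\tau(q_n,p'_n)$ otherwise, with chains as in the claim. *)

theory Defs
  imports Complex_Main "HOL-Library.Extended_Nonnegative_Real"
begin

text \<open>Lorentzian metric spaces. The topology sigma is the topology of the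
 type 'a (class topological_space), so X is the whole type. The time
 separation tau takes values in [0,\<infinity>] = ennreal.\<close>

definition lsc :: "('b::topological_space \<Rightarrow> 'c::linorder) \<Rightarrow> bool" where
  "lsc f \<longleftrightarrow> (\<forall>z c. c < f z \<longrightarrow> eventually (\<lambda>w. c < f w) (nhds z))"

definition lorentzian_metric_space :: "('a::topological_space \<Rightarrow> 'a \<Rightarrow> ennreal) \<Rightarrow> bool" where
  "lorentzian_metric_space tau \<longleftrightarrow>
     lsc (\<lambda>(x, y). tau x y) \<and>
     (\<forall>x y z. tau x y > 0 \<and> tau y z > 0 \<longrightarrow> tau x z \<ge> tau x y + tau y z)"

definition chron :: "('a \<Rightarrow> 'a \<Rightarrow> ennreal) \<Rightarrow> 'a \<Rightarrow> 'a \<Rightarrow> bool" where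
  "chron tau x y \<longleftrightarrow> tau x y > 0"

definition Ifut :: "('a \<Rightarrow> 'a \<Rightarrow> ennreal) \<Rightarrow> 'a \<Rightarrow> 'a set" where
  "Ifut tau x = {y. chron tau x y}"

definition Ipast :: "('a \<Rightarrow> 'a \<Rightarrow> ennreal) \<Rightarrow> 'a \<Rightarrow> 'a set" where
  "Ipast tau x = {y. chron tau y x}"

definition IfutS :: "('a \<Rightarrow> 'a \<Rightarrow> ennreal) \<Rightarrow> 'a set \<Rightarrow> 'a set" where
  "IfutS tau A = (\<Union>a\<in>A. Ifut tau a)"

definition IpastS :: "('a \<Rightarrow> 'a \<Rightarrow> ennreal) \<Rightarrow> 'a set \<Rightarrow> 'a set" where
  "IpastS tau A = (\<Union>a\<in>A. Ipast tau a)"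

definition future_chain :: "('a \<Rightarrow> 'a \<Rightarrow> ennreal) \<Rightarrow> (nat \<Rightarrow> 'a) \<Rightarrow> bool" where
  "future_chain tau x \<longleftrightarrow> (\<forall>n. chron tau (x n) (x (Suc n)))"

definition past_chain :: "('a \<Rightarrow> 'a \<Rightarrow> ennreal) \<Rightarrow> (nat \<Rightarrow> 'a) \<Rightarrow> bool" where
  "past_chain tau x \<longleftrightarrow> (\<forall>n. chron tau (x (Suc n)) (x n))"

definition separable_lms :: "('a \<Rightarrow> 'a \<Rightarrow> ennreal) \<Rightarrow> bool" where
  "separable_lms tau \<longleftrightarrow> (\<exists>S. countable S \<and>
     (\<forall>x y. chron tau x y \<longrightarrow> (\<exists>s\<in>S. chron tau x s \<and> chron tau s y)))"

definition chronologically_dense :: "('a::topological_space \<Rightarrow> 'a \<Rightarrow> ennreal) \<Rightarrow> bool" where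
  "chronologically_dense tau \<longleftrightarrow>
     (\<forall>x. Ipast tau x \<noteq> {} \<longrightarrow> (\<exists>c. future_chain tau c \<and> c \<longlonglongrightarrow> x)) \<and>
     (\<forall>x. Ifut tau x \<noteq> {} \<longrightarrow> (\<exists>c. past_chain tau c \<and> c \<longlonglongrightarrow> x))"

definition past_set :: "('a \<Rightarrow> 'a \<Rightarrow> ennreal) \<Rightarrow> 'a set \<Rightarrow> bool" where
  "past_set tau P \<longleftrightarrow> P = IpastS tau P"

definition future_set :: "('a \<Rightarrow> 'a \<Rightarrow> ennreal) \<Rightarrow> 'a set \<Rightarrow> bool" where
  "future_set tau F \<longleftrightarrow> F = IfutS tau F"

definition down :: "('a \<Rightarrow> 'a \<Rightarrow> ennreal) \<Rightarrow> 'a set \<Rightarrow> 'a set" where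
  "down tau S = IpastS tau {p. \<forall>q\<in>S. chron tau p q}"

definition up :: "('a \<Rightarrow> 'a \<Rightarrow> ennreal) \<Rightarrow> 'a set \<Rightarrow> 'a set" where
  "up tau S = IfutS tau {p. \<forall>q\<in>S. chron tau q p}"

definition IP :: "('a \<Rightarrow> 'a \<Rightarrow> ennreal) \<Rightarrow> 'a set \<Rightarrow> bool" where
  "IP tau P \<longleftrightarrow> P \<noteq> {} \<and> past_set tau P \<and>
     \<not> (\<exists>A B. past_set tau A \<and> past_set tau B \<and> A \<subset> P \<and> B \<subset> P \<and> P = A \<union> B)"

definition IF :: "('a \<Rightarrow> 'a \<Rightarrow> ennreal) \<Rightarrow> 'a set \<Rightarrow> bool" where
  "IF tau F \<longleftrightarrow> F \<noteq> {} \<and> future_set tau F \<and>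
     \<not> (\<exists>A B. future_set tau A \<and> future_set tau B \<and> A \<subset> F \<and> B \<subset> F \<and> F = A \<union> B)"

definition Srel_ne :: "('a \<Rightarrow> 'a \<Rightarrow> ennreal) \<Rightarrow> 'a set \<Rightarrow> 'a set \<Rightarrow> bool" where
  "Srel_ne tau P F \<longleftrightarrow>
     IP tau P \<and> IF tau F \<and>
     P \<subseteq> down tau F \<and> (\<forall>P'. IP tau P' \<and> P' \<subseteq> down tau F \<and> P \<subseteq> P' \<longrightarrow> P' = P) \<and>
     F \<subseteq> up tau P \<and> (\<forall>F'. IF tau F' \<and> F' \<subseteq> up tau P \<and> F \<subseteq> F' \<longrightarrow> F' = F)"

definition Srel :: "('a \<Rightarrow> 'a \<Rightarrow> ennreal) \<Rightarrow> 'a set \<Rightarrow> 'a set \<Rightarrow> bool" where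
  "Srel tau P F \<longleftrightarrow>
     (P \<noteq> {} \<and> F \<noteq> {} \<and> Srel_ne tau P F) \<or>
     (P \<noteq> {} \<and> F = {} \<and> IP tau P \<and> \<not> (\<exists>F'. F' \<noteq> {} \<and> Srel_ne tau P F')) \<or>
     (P = {} \<and> F \<noteq> {} \<and> IF tau F \<and> \<not> (\<exists>P'. P' \<noteq> {} \<and> Srel_ne tau P' F))"

definition S_property :: "('a \<Rightarrow> 'a \<Rightarrow> ennreal) \<Rightarrow> bool" where
  "S_property tau \<longleftrightarrow>
     (\<forall>x. Srel tau (Ipast tau x) (Ifut tau x) \<and>
        (\<forall>y. IF tau (Ifut tau y) \<and> Ifut tau y \<noteq> Ifut tau x \<longrightarrow>
              \<not> Srel tau (Ipast tau x) (Ifut tau y)) \<and>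
        (\<forall>y. IP tau (Ipast tau y) \<and> Ipast tau y \<noteq> Ipast tau x \<longrightarrow>
              \<not> Srel tau (Ipast tau y) (Ifut tau x)))"

definition c_completion :: "('a \<Rightarrow> 'a \<Rightarrow> ennreal) \<Rightarrow> ('a set \<times> 'a set) set" where
  "c_completion tau = {(P, F). Srel tau P F}"

end

theory Submission
  imports Defs
begin

text \<open>An IP is directed under \<open>\<ll>\<close> (otherwise it splits into the past of the
 points in the future of some \<open>x\<close> and the past of the remaining points), and by
 separability it has a countable cofinal subset; walking through that subset
 yields a future chain generating it. Dually every IF is generated by a past
 chain. For a past chain \<open>q\<close> and a future chain \<open>p\<close> the reverse triangle
 inequality makes \<open>\<tau>(q n, p n)\<close> nondecreasing, so it converges to its supremum,
 and cofinality shows that chains generating the same sets have the same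
 supremum.\<close>

lemma transp_chron:
  assumes "lorentzian_metric_space tau"
  shows "transp (chron tau)"
proof (rule transpI)
  fix x y z assume xy: "chron tau x y" and yz: "chron tau y z"
  have "tau x y \<le> tau x y + tau y z" by simp
  also have "\<dots> \<le> tau x z"
    using assms xy yz unfolding lorentzian_metric_space_def chron_def by blast
  finally show "chron tau x z" using xy unfolding chron_def by simp
qed

lemma tau_mono_chron:
  assumes lms: "lorentzian_metric_space tau"
    and ab: "chron tau a b" and cd: "chron tau c d"
  shows "tau b c \<le> tau a d"
proof (cases "chron tau b c")
  case False
  then show ?thesis by (simp add: chron_def)
next
  case bc: True
  have rti: "tau x z \<ge> tau x y + tau y z" if "chron tau x y" "chron tau y z" for x y z
    using lms that unfolding lorentzian_metric_space_def chron_def by blast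
  have "tau b c \<le> tau a b + tau b c" by simp
  also have "\<dots> \<le> tau a c" using rti[OF ab bc] .
  also have "\<dots> \<le> tau a c + tau c d" by simp
  also have "\<dots> \<le> tau a d"
    using rti[OF transpD[OF transp_chron[OF lms] ab bc] cd] .
  finally show ?thesis .
qed

lemma future_chain_chron:
  assumes "transp (chron tau)" and "future_chain tau p" and "m < n"
  shows "chron tau (p m) (p n)"
  using \<open>m < n\<close>
  by (induction rule: less_Suc_induct)
     (use assms in \<open>auto simp: future_chain_def dest: transpD\<close>)

lemma past_chain_chron:
  assumes "transp (chron tau)" and "past_chain tau q" and "m < n"
  shows "chron tau (q n) (q m)"
  using \<open>m < n\<close>
  by (induction rule: less_Suc_induct)
     (use assms in \<open>auto simp: past_chain_def dest: transpD\<close>)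

lemma past_set_IpastS:
  assumes "transp (chron tau)" and "separable_lms tau"
  shows "past_set tau (IpastS tau S)"
proof -
  have "IpastS tau S \<subseteq> IpastS tau (IpastS tau S)"
  proof
    fix r assume "r \<in> IpastS tau S"
    then obtain s where s: "s \<in> S" "chron tau r s" by (auto simp: IpastS_def Ipast_def)
    then obtain d where "chron tau r d" "chron tau d s"
      using assms(2) unfolding separable_lms_def by blast
    with s show "r \<in> IpastS tau (IpastS tau S)" by (auto simp: IpastS_def Ipast_def)
  qed
  moreover have "IpastS tau (IpastS tau S) \<subseteq> IpastS tau S"
    using assms(1) by (auto simp: IpastS_def Ipast_def dest: transpD)
  ultimately show ?thesis unfolding past_set_def by blast
qed

lemma IpastS_subset_past_set:
  assumes "past_set tau P" and "A \<subseteq> P"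
  shows "IpastS tau A \<subseteq> P"
  using assms unfolding past_set_def IpastS_def by blast

lemma IP_directed:
  assumes trans: "transp (chron tau)" and sep: "separable_lms tau"
    and ip: "IP tau P" and "x \<in> P" and "y \<in> P"
  shows "\<exists>z\<in>P. chron tau x z \<and> chron tau y z"
proof (rule ccontr)
  assume no_bound: "\<not> ?thesis"
  define A where "A = IpastS tau (Ifut tau x \<inter> P)"
  define B where "B = IpastS tau (P - Ifut tau x)"
  have past: "past_set tau P" using ip by (simp add: IP_def)
  have "P = IpastS tau P" using past by (simp add: past_set_def)
  also have "\<dots> = A \<union> B" unfolding A_def B_def IpastS_def by blast
  finally have split: "P = A \<union> B" .
  have "y \<notin> A" using no_bound by (auto simp: A_def IpastS_def Ipast_def Ifut_def)
  moreover have "x \<notin> B" by (auto simp: B_def IpastS_def Ipast_def Ifut_def)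
  moreover have "A \<subseteq> P" "B \<subseteq> P"
    unfolding A_def B_def by (auto intro!: IpastS_subset_past_set[OF past])
  ultimately have "A \<subset> P" "B \<subset> P" using \<open>x \<in> P\<close> \<open>y \<in> P\<close> by auto
  moreover have "past_set tau A" "past_set tau B"
    unfolding A_def B_def using past_set_IpastS[OF trans sep] by blast+
  ultimately show False using ip split unfolding IP_def by blast
qed

lemma IP_countable_cofinal:
  assumes "separable_lms tau" and "IP tau P"
  obtains T where "countable T" "T \<noteq> {}" "T \<subseteq> P" "\<forall>y\<in>P. \<exists>s\<in>T. chron tau y s"
proof -
  obtain D where D: "countable D" "\<And>x y. chron tau x y \<Longrightarrow> \<exists>s\<in>D. chron tau x s \<and> chron tau s y"
    using assms(1) unfolding separable_lms_def by blast
  have P: "P \<noteq> {}" "P = IpastS tau P" using assms(2) by (auto simp: IP_def past_set_def)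
  have cofinal: "\<exists>s\<in>D \<inter> P. chron tau y s" if "y \<in> P" for y
  proof -
    obtain w where "w \<in> P" "chron tau y w"
      using \<open>y \<in> P\<close> P(2) by (auto simp: IpastS_def Ipast_def)
    moreover obtain s where "s \<in> D" "chron tau y s" "chron tau s w" using D(2) \<open>chron tau y w\<close> by blast
    ultimately have "s \<in> IpastS tau P" by (auto simp: IpastS_def Ipast_def)
    with P(2) \<open>s \<in> D\<close> \<open>chron tau y s\<close> show ?thesis by auto
  qed
  show ?thesis
    by (rule that[of "D \<inter> P"]) (use D(1) P(1) cofinal in auto)
qed

lemma IP_eq_IpastS_future_chain:
  assumes trans: "transp (chron tau)" and sep: "separable_lms tau" and ip: "IP tau P"
  shows "\<exists>p. future_chain tau p \<and> P = IpastS tau (range p)"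
proof -
  obtain T where T: "countable T" "T \<noteq> {}" "T \<subseteq> P" "\<forall>y\<in>P. \<exists>s\<in>T. chron tau y s"
    using IP_countable_cofinal[OF sep ip] by blast
  define t where "t = from_nat_into T"
  have range_t: "range t = T" unfolding t_def using range_from_nat_into[OF T(2,1)] .
  then have t_P: "t n \<in> P" for n using T(3) by auto
  have "\<exists>p. \<forall>n. (p n \<in> P \<and> chron tau (t n) (p n)) \<and> chron tau (p n) (p (Suc n))"
  proof (rule dependent_nat_choice)
    show "\<exists>x. x \<in> P \<and> chron tau (t 0) x"
      using IP_directed[OF trans sep ip t_P t_P] by blast
    show "\<exists>y. (y \<in> P \<and> chron tau (t (Suc n)) y) \<and> chron tau x y"
      if "x \<in> P \<and> chron tau (t n) x" for x n
      using IP_directed[OF trans sep ip _ t_P, of x "Suc n"] that by blast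
  qed
  then obtain p where p: "\<And>n. p n \<in> P" "\<And>n. chron tau (t n) (p n)" "future_chain tau p"
    unfolding future_chain_def by blast
  have "P \<subseteq> IpastS tau (range p)"
  proof
    fix y assume "y \<in> P"
    then obtain n where "chron tau y (t n)" using T(4) range_t by blast
    then have "chron tau y (p n)" using p(2) trans by (blast dest: transpD)
    then show "y \<in> IpastS tau (range p)" by (auto simp: IpastS_def Ipast_def)
  qed
  moreover have "IpastS tau (range p) \<subseteq> P"
    using ip p(1) by (intro IpastS_subset_past_set) (auto simp: IP_def)
  ultimately show ?thesis using p(3) by blast
qed

lemma IP_flip: "IP (\<lambda>x y. tau y x) F = IF tau F"
  by (simp add: IF_def IP_def future_set_def past_set_def IfutS_def IpastS_def
      Ifut_def Ipast_def chron_def)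

lemma IpastS_flip: "IpastS (\<lambda>x y. tau y x) A = IfutS tau A"
  by (simp add: IpastS_def IfutS_def Ipast_def Ifut_def chron_def)

lemma future_chain_flip: "future_chain (\<lambda>x y. tau y x) q = past_chain tau q"
  by (simp add: future_chain_def past_chain_def chron_def)

lemma transp_chron_flip: "transp (chron tau) \<Longrightarrow> transp (chron (\<lambda>x y. tau y x))"
  unfolding chron_def by (auto intro!: transpI dest: transpD)

lemma separable_lms_flip: "separable_lms tau \<Longrightarrow> separable_lms (\<lambda>x y. tau y x)"
  unfolding separable_lms_def chron_def by metis

lemma IF_eq_IfutS_past_chain:
  assumes "transp (chron tau)" and "separable_lms tau" and "IF tau F"
  shows "\<exists>q. past_chain tau q \<and> F = IfutS tau (range q)"
proof -
  have "IP (\<lambda>x y. tau y x) F" using assms(3) by (simp only: IP_flip[of tau])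
  then obtain q where "future_chain (\<lambda>x y. tau y x) q" "F = IpastS (\<lambda>x y. tau y x) (range q)"
    using IP_eq_IpastS_future_chain[OF transp_chron_flip[OF assms(1)] separable_lms_flip[OF assms(2)]]
    by blast
  then show ?thesis by (simp only: future_chain_flip[of tau] IpastS_flip[of tau]) blast
qed

lemma c_completion_IF: "(P, F) \<in> c_completion tau \<Longrightarrow> F \<noteq> {} \<Longrightarrow> IF tau F"
  unfolding c_completion_def Srel_def Srel_ne_def by blast

lemma c_completion_IP: "(P, F) \<in> c_completion tau \<Longrightarrow> P \<noteq> {} \<Longrightarrow> IP tau P"
  unfolding c_completion_def Srel_def Srel_ne_def by blast

lemma incseq_tau_chains:
  assumes "lorentzian_metric_space tau" "past_chain tau q" "future_chain tau p"
  shows "incseq (\<lambda>n. tau (q n) (p n))"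
  using assms tau_mono_chron unfolding past_chain_def future_chain_def
  by (intro incseq_SucI) blast

lemma SUP_tau_chains_mono:
  assumes lms: "lorentzian_metric_space tau"
    and q: "past_chain tau q" and r: "past_chain tau r"
    and p: "future_chain tau p" and s: "future_chain tau s"
    and F: "IfutS tau (range q) \<subseteq> IfutS tau (range r)"
    and P: "IpastS tau (range p) \<subseteq> IpastS tau (range s)"
  shows "(SUP n. tau (q n) (p n)) \<le> (SUP n. tau (r n) (s n))"
proof (rule SUP_mono)
  fix n
  have trans: "transp (chron tau)" using transp_chron[OF lms] .
  have "q n \<in> IfutS tau (range q)" using q by (auto simp: past_chain_def IfutS_def Ifut_def)
  then obtain m where m: "chron tau (r m) (q n)" using F by (auto simp: IfutS_def Ifut_def)
  have "p n \<in> IpastS tau (range p)" using p by (auto simp: future_chain_def IpastS_def Ipast_def)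
  then obtain k where k: "chron tau (p n) (s k)" using P by (auto simp: IpastS_def Ipast_def)
  define N where "N = Suc (max m k)"
  have "m < N" "k < N" by (simp_all add: N_def)
  have "chron tau (r N) (q n)"
    using transpD[OF trans past_chain_chron[OF trans r \<open>m < N\<close>] m] .
  moreover have "chron tau (p n) (s N)"
    using transpD[OF trans k future_chain_chron[OF trans s \<open>k < N\<close>]] .
  ultimately have "tau (q n) (p n) \<le> tau (r N) (s N)" by (rule tau_mono_chron[OF lms])
  then show "\<exists>m\<in>UNIV. tau (q n) (p n) \<le> tau (r m) (s m)" by blast
qed

theorem mainTheorem15:
  fixes tau :: "'a::topological_space \<Rightarrow> 'a \<Rightarrow> ennreal"
    and P F P' F' :: "'a set"
  assumes "lorentzian_metric_space tau"
    and "separable_lms tau"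
    and "chronologically_dense tau"
    and "S_property tau"
    and "(P, F) \<in> c_completion tau"
    and "(P', F') \<in> c_completion tau"
    and "F \<noteq> {}" and "P' \<noteq> {}"
  shows "(\<exists>q. past_chain tau q \<and> F = IfutS tau (range q)) \<and>
         (\<exists>p'. future_chain tau p' \<and> P' = IpastS tau (range p')) \<and>
         (\<exists>L::ennreal. \<forall>q p'. past_chain tau q \<and> F = IfutS tau (range q) \<and>
                              future_chain tau p' \<and> P' = IpastS tau (range p') \<longrightarrow>
                              (\<lambda>n. tau (q n) (p' n)) \<longlonglongrightarrow> L)"
proof -
  note lms = assms(1) and trans = transp_chron[OF assms(1)]
  obtain q0 where q0: "past_chain tau q0" "F = IfutS tau (range q0)"
    using IF_eq_IfutS_past_chain[OF trans assms(2) c_completion_IF[OF assms(5,7)]] by blast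
  obtain p0 where p0: "future_chain tau p0" "P' = IpastS tau (range p0)"
    using IP_eq_IpastS_future_chain[OF trans assms(2) c_completion_IP[OF assms(6,8)]] by blast
  have "(\<lambda>n. tau (q n) (p n)) \<longlonglongrightarrow> (SUP n. tau (q0 n) (p0 n))"
    if "past_chain tau q" "F = IfutS tau (range q)" "future_chain tau p" "P' = IpastS tau (range p)"
    for q p
  proof -
    have "(SUP n. tau (q n) (p n)) = (SUP n. tau (q0 n) (p0 n))"
      using SUP_tau_chains_mono[OF lms, of q q0 p p0] SUP_tau_chains_mono[OF lms, of q0 q p0 p]
        that q0 p0 by (auto intro: antisym)
    then show ?thesis using LIMSEQ_SUP[OF incseq_tau_chains[OF lms that(1,3)]] by simp
  qed
  then show ?thesis using q0 p0 by blast
qed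

end
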